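(* Fix a sensor index $k$, integers $N\ge1$, $B_k\ge1$, $\Delta^{\max}\ge2$, probabilities $p_{k,1},\dots,p_{k,N}\in[0,1]$, $\lambda_k\in[0,1]$, and $\mu\ge0$. Let $\mathcal{S}_k=\{0,\dots,N\}\times\{0,\dots,B_k\}\times\{1,\dots,\Delta^{\max}\}$, $\mathcal{A}_k=\{0,1\}$, $c_k(s,a)=r\min\{(1-a\mathbf{1}\{b\ge1\})\Delta+1,\Delta^{\max}\}$ for $s=(r,b,\Delta)$, and let $\Pr(s'\mid s,a)$ be the transition probabilities defined as follows for $s'=(r',b',\Delta')$: $r'$ is distributed as $\sum_{n=1}^N X_n$ with independent $X_n\sim$ Bernoulli$(p_{k,n})$, independently of everything else; $b'=\min\{b+e-a\mathbf{1}\{b\ge1\},B_k\}$ with $e\sim$ Bernoulli$(\lambda_k)$ independent; $\Delta'=\min\{(1-a\mathbf{1}\{b\ge1\})\Delta+1,\Delta^{\max}\}$. Fix a reference state $s_{\mathrm{ref}}\in\mathcal{S}_k$, set $V^{(0)}\equiv0$, $h^{(0)}\equiv0$, and for $i=0,1,\dots$ define $V^{(i+1)}(s)=\min_{a\in\mathcal{A}_k}\big[c_k(s,a)+\mu a+\sum_{s'\in\mathcal{S}_k}\Pr(s'\mid s,a)h^{(i)}(s')\big]$, $h^{(i+1)}(s)=V^{(i+1)}(s)-V^{(i+1)}(s_{\mathrm{ref}})$. Let $V$ be the limit of $V^{(i)}$ as $i\to\infty$. Then $V$ is non-decreasing with respect to the AoI: for any two states $s=(r,b,\Delta)$ and $\bar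 s=(r,b,\bar\Delta)$ in $\mathcal{S}_k$ with $\bar\Delta\ge\Delta$, we have $V(\bar s)\ge V(s)$.
   Context: The iteration above is the relative value iteration algorithm for the per-sensor MDP with state space $\mathcal{S}_k$, action space $\mathcal{A}_k$, transition probabilities $\Pr(s'\mid s,a)$ and per-stage cost $c_k(s,a)+\mu a$; the limit $V$ is assumed to exist. *)

theory Defs
  imports "HOL-Probability.Probability"
begin

type_synonym state = "nat \<times> nat \<times> nat"  (* (r, b, Delta) *)

definition state_space :: "nat \<Rightarrow> nat \<Rightarrow> nat \<Rightarrow> state set" where
  "state_space N B Dmax = {0..N} \<times> {0..B} \<times> {1..Dmax}"

fun bern_sum :: "(nat \<Rightarrow> real) \<Rightarrow> nat \<Rightarrow> nat pmf" where
  "bern_sum p 0 = return_pmf 0"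
| "bern_sum p (Suc n) =
     bind_pmf (bern_sum p n) (\<lambda>x. map_pmf (\<lambda>e. x + (if e then 1 else 0)) (bernoulli_pmf (p (Suc n))))"

definition served :: "nat \<Rightarrow> nat \<Rightarrow> nat" where
  "served b a = a * (if b \<ge> 1 then 1 else 0)"

definition cost :: "nat \<Rightarrow> state \<Rightarrow> nat \<Rightarrow> real" where
  "cost Dmax s a = (case s of (r, b, D) \<Rightarrow>
      real r * real (min ((1 - served b a) * D + 1) Dmax))"

definition next_pmf :: "(nat \<Rightarrow> real) \<Rightarrow> real \<Rightarrow> nat \<Rightarrow> nat \<Rightarrow> nat \<Rightarrow> state \<Rightarrow> nat \<Rightarrow> state pmf" where
  "next_pmf p lam N B Dmax s a = (case s of (r, b, D) \<Rightarrow>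
      bind_pmf (bern_sum p N) (\<lambda>r'.
      map_pmf (\<lambda>e. (r', min (b + (if e then 1 else 0) - served b a) B,
                          min ((1 - served b a) * D + 1) Dmax))
              (bernoulli_pmf lam)))"

definition trans_prob :: "(nat \<Rightarrow> real) \<Rightarrow> real \<Rightarrow> nat \<Rightarrow> nat \<Rightarrow> nat \<Rightarrow> state \<Rightarrow> nat \<Rightarrow> state \<Rightarrow> real" where
  "trans_prob p lam N B Dmax s a s' = pmf (next_pmf p lam N B Dmax s a) s'"

text \<open>Relative value iteration: rvi i = (V^(i), h^(i)).\<close>
fun rvi :: "(nat \<Rightarrow> real) \<Rightarrow> real \<Rightarrow> real \<Rightarrow> nat \<Rightarrow> nat \<Rightarrow> nat \<Rightarrow> state \<Rightarrow> nat
            \<Rightarrow> (state \<Rightarrow> real) \<times> (state \<Rightarrow> real)" where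
  "rvi p lam mu N B Dmax sref 0 = ((\<lambda>_. 0), (\<lambda>_. 0))"
| "rvi p lam mu N B Dmax sref (Suc i) =
     (let h = snd (rvi p lam mu N B Dmax sref i);
          Q = (\<lambda>s a. cost Dmax s a + mu * real a
                 + (\<Sum>s'\<in>state_space N B Dmax. trans_prob p lam N B Dmax s a s' * h s'));
          V' = (\<lambda>s. Min ((Q s) ` {0, 1}))
      in (V', (\<lambda>s. V' s - V' sref)))"

definition Vit :: "(nat \<Rightarrow> real) \<Rightarrow> real \<Rightarrow> real \<Rightarrow> nat \<Rightarrow> nat \<Rightarrow> nat \<Rightarrow> state \<Rightarrow> nat \<Rightarrow> state \<Rightarrow> real" where
  "Vit p lam mu N B Dmax sref i = fst (rvi p lam mu N B Dmax sref i)"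

end

theory Submission
  imports Defs
begin

text \<open>Of the next state (r', b', \<Delta>') only \<Delta>' depends on the current AoI \<Delta>, namely through
  the non-decreasing map \<Delta> \<mapsto> min ((1 - a 1{b \<ge> 1}) \<Delta> + 1) Dmax, while the law of (r', b')
  is the same for every \<Delta>. So the transition law from (r, b, \<Delta>) is the image of one fixed law
  under a map that is monotone in \<Delta>, the stage cost is monotone in \<Delta> as well, and hence one
  Bellman update maps functions that are non-decreasing in the AoI to such functions. By induction
  all iterates V^(i) and h^(i) (which differ by a constant) are non-decreasing in the AoI, and the
  weak inequalities survive the limit.\<close>

lemma set_pmf_bern_sum: "set_pmf (bern_sum p n) \<subseteq> {0..n}"
  by (induction n) (auto simp: set_bind_pmf split: if_splits)

definition next_rb_pmf :: "(nat \<Rightarrow> real) \<Rightarrow> real \<Rightarrow> nat \<Rightarrow> nat \<Rightarrow> nat \<Rightarrow> nat \<Rightarrow> (nat \<times> nat) pmf" where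
  "next_rb_pmf p lam N B b a =
     bind_pmf (bern_sum p N) (\<lambda>r'.
       map_pmf (\<lambda>e. (r', min (b + (if e then 1 else 0) - served b a) B)) (bernoulli_pmf lam))"

definition next_aoi :: "nat \<Rightarrow> nat \<Rightarrow> nat \<Rightarrow> nat \<Rightarrow> nat" where
  "next_aoi Dmax b a D = min ((1 - served b a) * D + 1) Dmax"

lemma next_aoi_mono: "D \<le> D' \<Longrightarrow> next_aoi Dmax b a D \<le> next_aoi Dmax b a D'"
  unfolding next_aoi_def by (intro min.mono add_right_mono mult_le_mono2) auto

lemma next_pmf_eq_map_next_rb_pmf:
  "next_pmf p lam N B Dmax (r, b, D) a
     = map_pmf (\<lambda>(r', b'). (r', b', next_aoi Dmax b a D)) (next_rb_pmf p lam N B b a)"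
  by (simp add: next_pmf_def next_rb_pmf_def next_aoi_def map_bind_pmf pmf.map_comp o_def)

lemma set_pmf_next_rb_pmf: "set_pmf (next_rb_pmf p lam N B b a) \<subseteq> {0..N} \<times> {0..B}"
  using set_pmf_bern_sum[of p N] by (auto simp: next_rb_pmf_def set_bind_pmf)

lemma sum_trans_prob_eq_expectation:
  assumes "Dmax \<ge> 1"
  shows "(\<Sum>s'\<in>state_space N B Dmax. trans_prob p lam N B Dmax (r, b, D) a s' * h s')
    = measure_pmf.expectation (next_rb_pmf p lam N B b a)
        (\<lambda>(r', b'). h (r', b', next_aoi Dmax b a D))"
proof -
  let ?M = "next_pmf p lam N B Dmax (r, b, D) a"
  have "set_pmf ?M \<subseteq> state_space N B Dmax"
    using set_pmf_next_rb_pmf[of p lam N B b a] assms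
    by (auto simp: next_pmf_eq_map_next_rb_pmf state_space_def next_aoi_def)
  then have "measure_pmf.expectation ?M h = (\<Sum>s'\<in>state_space N B Dmax. h s' * pmf ?M s')"
    by (intro integral_measure_pmf_real) (auto simp: state_space_def)
  then show ?thesis
    by (simp add: trans_prob_def mult.commute next_pmf_eq_map_next_rb_pmf case_prod_beta')
qed

definition aoi_mono :: "(state \<Rightarrow> real) \<Rightarrow> bool" where
  "aoi_mono f \<longleftrightarrow> (\<forall>r b D D'. D \<le> D' \<longrightarrow> f (r, b, D) \<le> f (r, b, D'))"

lemma aoi_monoI: "(\<And>r b D D'. D \<le> D' \<Longrightarrow> f (r, b, D) \<le> f (r, b, D')) \<Longrightarrow> aoi_mono f"
  and aoi_monoD: "aoi_mono f \<Longrightarrow> D \<le> D' \<Longrightarrow> f (r, b, D) \<le> f (r, b, D')"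
  by (auto simp: aoi_mono_def)

lemma cost_eq_next_aoi: "cost Dmax (r, b, D) a = real r * real (next_aoi Dmax b a D)"
  by (simp add: cost_def next_aoi_def)

lemma aoi_mono_cost: "aoi_mono (\<lambda>s. cost Dmax s a)"
  by (intro aoi_monoI) (simp add: cost_eq_next_aoi mult_left_mono next_aoi_mono)

lemma aoi_mono_expectation_next:
  assumes "Dmax \<ge> 1" and "aoi_mono h"
  shows "aoi_mono (\<lambda>s. \<Sum>s'\<in>state_space N B Dmax. trans_prob p lam N B Dmax s a s' * h s')"
proof (rule aoi_monoI)
  fix r b D D' :: nat
  assume "D \<le> D'"
  let ?M = "next_rb_pmf p lam N B b a"
  have "finite (set_pmf ?M)"
    using set_pmf_next_rb_pmf by (rule finite_subset) simp
  then have integrable: "integrable ?M f" for f :: "nat \<times> nat \<Rightarrow> real"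
    by (rule integrable_measure_pmf_finite)
  have "h (r', b', next_aoi Dmax b a D) \<le> h (r', b', next_aoi Dmax b a D')" for r' b'
    using \<open>aoi_mono h\<close> next_aoi_mono[OF \<open>D \<le> D'\<close>] by (rule aoi_monoD)
  then have "measure_pmf.expectation ?M (\<lambda>(r', b'). h (r', b', next_aoi Dmax b a D))
      \<le> measure_pmf.expectation ?M (\<lambda>(r', b'). h (r', b', next_aoi Dmax b a D'))"
    by (intro integral_mono integrable) (simp add: case_prod_beta')
  then show "(\<Sum>s'\<in>state_space N B Dmax. trans_prob p lam N B Dmax (r, b, D) a s' * h s')
      \<le> (\<Sum>s'\<in>state_space N B Dmax. trans_prob p lam N B Dmax (r, b, D') a s' * h s')"
    by (simp only: sum_trans_prob_eq_expectation[OF \<open>Dmax \<ge> 1\<close>])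
qed

definition qvalue :: "(nat \<Rightarrow> real) \<Rightarrow> real \<Rightarrow> real \<Rightarrow> nat \<Rightarrow> nat \<Rightarrow> nat
    \<Rightarrow> (state \<Rightarrow> real) \<Rightarrow> state \<Rightarrow> nat \<Rightarrow> real" where
  "qvalue p lam mu N B Dmax h s a = cost Dmax s a + mu * real a
     + (\<Sum>s'\<in>state_space N B Dmax. trans_prob p lam N B Dmax s a s' * h s')"

definition bellman_min :: "(nat \<Rightarrow> real) \<Rightarrow> real \<Rightarrow> real \<Rightarrow> nat \<Rightarrow> nat \<Rightarrow> nat
    \<Rightarrow> (state \<Rightarrow> real) \<Rightarrow> state \<Rightarrow> real" where
  "bellman_min p lam mu N B Dmax h s =
     min (qvalue p lam mu N B Dmax h s 0) (qvalue p lam mu N B Dmax h s 1)"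

lemma rvi_Suc:
  "rvi p lam mu N B Dmax sref (Suc i) =
     (let V' = bellman_min p lam mu N B Dmax (snd (rvi p lam mu N B Dmax sref i))
      in (V', \<lambda>s. V' s - V' sref))"
  by (simp add: Let_def bellman_min_def[abs_def] qvalue_def)

lemma aoi_mono_bellman_min:
  assumes "Dmax \<ge> 1" and "aoi_mono h"
  shows "aoi_mono (bellman_min p lam mu N B Dmax h)"
proof -
  have "aoi_mono (\<lambda>s. qvalue p lam mu N B Dmax h s a)" for a
    using aoi_monoD[OF aoi_mono_cost] aoi_monoD[OF aoi_mono_expectation_next[OF assms]]
    by (intro aoi_monoI) (simp add: qvalue_def add_mono)
  then show ?thesis
    unfolding bellman_min_def by (intro aoi_monoI min.mono) (auto dest: aoi_monoD)
qed

lemma aoi_mono_rvi: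
  assumes "Dmax \<ge> 1"
  shows "aoi_mono (fst (rvi p lam mu N B Dmax sref i)) \<and> aoi_mono (snd (rvi p lam mu N B Dmax sref i))"
proof (induction i)
  case 0
  show ?case by (simp add: aoi_mono_def)
next
  case (Suc i)
  define W where "W = bellman_min p lam mu N B Dmax (snd (rvi p lam mu N B Dmax sref i))"
  have "aoi_mono W"
    unfolding W_def using aoi_mono_bellman_min[OF assms] Suc.IH by blast
  moreover have "aoi_mono (\<lambda>s. W s - W sref)"
    using aoi_monoD[OF \<open>aoi_mono W\<close>] by (intro aoi_monoI) simp
  ultimately show ?case
    by (simp only: rvi_Suc Let_def flip: W_def) simp
qed

theorem lemma1:
  fixes N B Dmax :: nat and p :: "nat \<Rightarrow> real" and lam mu :: real
    and sref :: state and V :: "state \<Rightarrow> real"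
    and r b D D' :: nat
  assumes "N \<ge> 1" and "B \<ge> 1" and "Dmax \<ge> 2"
    and "\<forall>n\<in>{1..N}. 0 \<le> p n \<and> p n \<le> 1"
    and "0 \<le> lam" and "lam \<le> 1" and "mu \<ge> 0"
    and "sref \<in> state_space N B Dmax"
    and "\<forall>s\<in>state_space N B Dmax. (\<lambda>i. Vit p lam mu N B Dmax sref i s) \<longlonglongrightarrow> V s"
    and "(r, b, D) \<in> state_space N B Dmax" and "(r, b, D') \<in> state_space N B Dmax"
    and "D' \<ge> D"
  shows "V (r, b, D') \<ge> V (r, b, D)"
proof (rule LIMSEQ_le)
  show "(\<lambda>i. Vit p lam mu N B Dmax sref i (r, b, D)) \<longlonglongrightarrow> V (r, b, D)"
   and "(\<lambda>i. Vit p lam mu N B Dmax sref i (r, b, D')) \<longlonglongrightarrow> V (r, b, D')"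
    using assms by blast+
  \<comment> \<open>Only Dmax \<ge> 1 is needed: the monotonicity holds for all parameters and at all states,
    since bernoulli_pmf clips its parameter to [0, 1] and mu * a does not depend on the AoI.\<close>
  have "aoi_mono (Vit p lam mu N B Dmax sref i)" for i
    using aoi_mono_rvi[of Dmax] \<open>Dmax \<ge> 2\<close> by (simp add: Vit_def)
  then show "\<exists>n0. \<forall>i\<ge>n0. Vit p lam mu N B Dmax sref i (r, b, D) \<le> Vit p lam mu N B Dmax sref i (r, b, D')"
    using aoi_monoD \<open>D' \<ge> D\<close> by blast
qed

end
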